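(* Let $G$ be a Hausdorff topological group, $Y$ a topological space, $\theta$ a nice partial action of $G$ on $Y$, and $X$ a compact space, with $\hat\theta$ the induced partial action on $C(X,Y)$. Then the enveloping space $C(X,Y)_G$ is homeomorphic to an open subset of $C(X,Y_G)$ (compact-open topology), where $Y_G$ is the enveloping space of $\theta$.
   Context: A topological partial action of $G$ on $Y$ is a family of homeomorphisms $\theta_g\colon Y_{g^{-1}}\to Y_g$ between open subsets with $Y_e=Y$, $\theta_e=\mathrm{id}_Y$, $\theta_{g^{-1}}=\theta_g^{-1}$, $\theta_g\circ\theta_h$ a restriction of $\theta_{gh}$; it is nice if $G*Y=\{(g,y): y\in Y_{g^{-1}}\}$ is open in $G\times Y$ and $(g,y)\mapsto\theta_g(y)$ is continuous on $G*Y$. $C(X,Y)$ has the compact-open topology; $\hat\theta$ has $C(X,Y)_g=\{f: f(X)\subset Y_g\}$ and $\hat\theta_g(f)=\theta_g\circ f$. For a topological partial action on $W$, the enveloping space is $W_G=(G\times W)/R$ with the quotient topology, where $(g,x)R(h,y)$ iff $x\in W_{g^{-1}h}$ and $\theta_{h^{-1}g}(x)=y$. *)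

theory Defs
  imports "HOL-Analysis.Analysis" "HOL-Library.FuncSet"
begin

text \<open>A topological group: a group (type class group_add, written additively but not
necessarily commutative) with a topology on the whole type such that multiplication
and inversion are continuous.\<close>

definition topological_group :: "'g::group_add topology \<Rightarrow> bool" where
  "topological_group TG \<longleftrightarrow>
     topspace TG = UNIV \<and>
     continuous_map (prod_topology TG TG) TG (\<lambda>(g, h). g + h) \<and>
     continuous_map TG TG uminus"

text \<open>A topological partial action of G on the space Y: D g is the open set Y_g and
th g the homeomorphism Y_{g^{-1}} \<rightarrow> Y_g.\<close>

definition topological_partial_action ::
  "'y topology \<Rightarrow> ('g::group_add \<Rightarrow> 'y set) \<Rightarrow> ('g \<Rightarrow> 'y \<Rightarrow> 'y) \<Rightarrow> bool" where
  "topological_partial_action Y D th \<longleftrightarrow>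
     (\<forall>g. openin Y (D g)) \<and>
     D 0 = topspace Y \<and>
     (\<forall>y\<in>topspace Y. th 0 y = y) \<and>
     (\<forall>g. homeomorphic_map (subtopology Y (D (- g))) (subtopology Y (D g)) (th g)) \<and>
     (\<forall>g. \<forall>y\<in>D (- g). th (- g) (th g y) = y) \<and>
     (\<forall>g h y. y \<in> D (- h) \<and> th h y \<in> D (- g) \<longrightarrow>
          y \<in> D (- (g + h)) \<and> th g (th h y) = th (g + h) y)"

definition nice_partial_action ::
  "'g::group_add topology \<Rightarrow> 'y topology \<Rightarrow> ('g \<Rightarrow> 'y set) \<Rightarrow> ('g \<Rightarrow> 'y \<Rightarrow> 'y) \<Rightarrow> bool" where
  "nice_partial_action TG Y D th \<longleftrightarrow>
     topological_partial_action Y D th \<and>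
     openin (prod_topology TG Y) {(g, y). y \<in> D (- g)} \<and>
     continuous_map (subtopology (prod_topology TG Y) {(g, y). y \<in> D (- g)}) Y
        (\<lambda>(g, y). th g y)"

text \<open>Continuous maps X \<rightarrow> Y, represented canonically as extensional functions
(value undefined outside topspace X), with the compact-open topology.\<close>

definition cmaps :: "'x topology \<Rightarrow> 'y topology \<Rightarrow> ('x \<Rightarrow> 'y) set" where
  "cmaps X Y = {f. continuous_map X Y f \<and> f \<in> extensional (topspace X)}"

definition compact_open :: "'x topology \<Rightarrow> 'y topology \<Rightarrow> ('x \<Rightarrow> 'y) topology" where
  "compact_open X Y = topology_generated_by
     {{f \<in> cmaps X Y. f ` K \<subseteq> U} | K U. compactin X K \<and> openin Y U}"

definition cmaps_dom :: "'x topology \<Rightarrow> 'y topology \<Rightarrow> ('g \<Rightarrow> 'y set) \<Rightarrow> 'g \<Rightarrow> ('x \<Rightarrow> 'y) set" where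
  "cmaps_dom X Y D g = {f \<in> cmaps X Y. f ` topspace X \<subseteq> D g}"

definition cmaps_act :: "'x topology \<Rightarrow> ('g \<Rightarrow> 'y \<Rightarrow> 'y) \<Rightarrow> 'g \<Rightarrow> ('x \<Rightarrow> 'y) \<Rightarrow> ('x \<Rightarrow> 'y)" where
  "cmaps_act X th g f = (\<lambda>x\<in>topspace X. th g (f x))"

definition quotient_topology :: "'a topology \<Rightarrow> ('a \<times> 'a) set \<Rightarrow> 'a set topology" where
  "quotient_topology T R =
     topology (\<lambda>U. U \<subseteq> topspace T // R \<and> openin T (\<Union>U))"

definition env_rel :: "'w topology \<Rightarrow> ('g::group_add \<Rightarrow> 'w set) \<Rightarrow> ('g \<Rightarrow> 'w \<Rightarrow> 'w)
    \<Rightarrow> (('g \<times> 'w) \<times> ('g \<times> 'w)) set" where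
  "env_rel W D th = {((g, x), (h, y)). x \<in> topspace W \<and> x \<in> D (- g + h) \<and> th (- h + g) x = y}"

definition enveloping_space :: "'g::group_add topology \<Rightarrow> 'w topology \<Rightarrow> ('g \<Rightarrow> 'w set)
    \<Rightarrow> ('g \<Rightarrow> 'w \<Rightarrow> 'w) \<Rightarrow> ('g \<times> 'w) set topology" where
  "enveloping_space TG W D th = quotient_topology (prod_topology TG W) (env_rel W D th)"

end

theory Submission
  imports Defs
begin

text \<open>Let \<open>\<Phi>(g, f) = (x \<mapsto> [g, f x])\<close>, a map \<open>G \<times> C(X,Y) \<rightarrow> C(X, Y\<^sub>G)\<close>. It is continuous
  by the tube lemma. It is open: each \<open>y \<mapsto> [g, y]\<close> is an open embedding of \<open>Y\<close> into \<open>Y\<^sub>G\<close>,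
  and post-composition with an open embedding is open on \<open>C(X, -)\<close> because \<open>X\<close> is compact.
  Pointwise, \<open>[g, f x] = [h, f' x]\<close> says exactly \<open>f' = \<theta>\<^bsub>-h+g\<^esub> \<circ> f\<close>, so the fibres of \<open>\<Phi>\<close> are the classes of the enveloping
  relation of the induced action on \<open>C(X,Y)\<close>, and \<open>\<Phi>\<close> induces a homeomorphism of \<open>C(X,Y)\<^sub>G\<close>
  onto its open image.\<close>

lemma openin_quotient_topology:
  assumes "equiv (topspace T) R"
  shows "openin (quotient_topology T R) U \<longleftrightarrow> U \<subseteq> topspace T // R \<and> openin T (\<Union>U)"
proof -
  have Union_Int: "\<Union>(S \<inter> V) = \<Union>S \<inter> \<Union>V" if "S \<subseteq> topspace T // R" "V \<subseteq> topspace T // R" for S V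
  proof
    show "\<Union>S \<inter> \<Union>V \<subseteq> \<Union>(S \<inter> V)"
    proof
      fix x assume "x \<in> \<Union>S \<inter> \<Union>V"
      then obtain c d where "c \<in> S" "d \<in> V" "x \<in> c" "x \<in> d" by auto
      moreover from this have "c = d"
        using quotient_disj[OF assms] that by blast
      ultimately show "x \<in> \<Union>(S \<inter> V)" by auto
    qed
  qed auto
  have "istopology (\<lambda>U. U \<subseteq> topspace T // R \<and> openin T (\<Union>U))"
    unfolding istopology_def
  proof (rule conjI; intro allI impI)
    fix S V
    assume "S \<subseteq> topspace T // R \<and> openin T (\<Union>S)" "V \<subseteq> topspace T // R \<and> openin T (\<Union>V)"
    then show "S \<inter> V \<subseteq> topspace T // R \<and> openin T (\<Union>(S \<inter> V))"
      by (auto simp: Union_Int)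
  next
    fix K assume K: "\<forall>S\<in>K. S \<subseteq> topspace T // R \<and> openin T (\<Union>S)"
    then have "openin T (\<Union>(Union ` K))"
      by (intro openin_Union) auto
    moreover have "\<Union>(\<Union>K) = \<Union>(Union ` K)"
      by auto
    ultimately show "\<Union>K \<subseteq> topspace T // R \<and> openin T (\<Union>(\<Union>K))"
      using K by auto
  qed
  then show ?thesis
    unfolding quotient_topology_def by (simp add: topology_inverse')
qed

lemma topspace_quotient_topology:
  assumes "equiv (topspace T) R"
  shows "topspace (quotient_topology T R) = topspace T // R"
proof -
  have "openin (quotient_topology T R) (topspace T // R)"
    using assms by (simp add: openin_quotient_topology Union_quotient)
  then have "topspace T // R \<subseteq> topspace (quotient_topology T R)"
    by (rule openin_subset)
  moreover have "topspace (quotient_topology T R) \<subseteq> topspace T // R"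
    using openin_quotient_topology[OF assms] by (metis openin_topspace)
  ultimately show ?thesis
    by blast
qed

lemma quotient_map_quotient_topology:
  assumes "equiv (topspace T) R"
  shows "quotient_map T (quotient_topology T R) (\<lambda>x. R `` {x})"
  unfolding quotient_map_def topspace_quotient_topology[OF assms]
proof (intro conjI allI impI)
  show "(\<lambda>x. R `` {x}) ` topspace T = topspace T // R"
    by (auto simp: quotient_def)
  fix U assume U: "U \<subseteq> topspace T // R"
  have "{x \<in> topspace T. R `` {x} \<in> U} = \<Union>U"
  proof
    show "{x \<in> topspace T. R `` {x} \<in> U} \<subseteq> \<Union>U"
      using equiv_class_self[OF assms] by blast
    show "\<Union>U \<subseteq> {x \<in> topspace T. R `` {x} \<in> U}"
    proof clarify
      fix x c assume x: "x \<in> c" and c: "c \<in> U"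
      then have "c \<in> topspace T // R"
        using U by blast
      then obtain y where "c = R `` {y}"
        by (rule quotientE)
      then have "R `` {x} = c"
        using x equiv_class_eq[OF assms] by blast
      moreover have "x \<in> topspace T"
        using x in_quotient_imp_subset[OF assms \<open>c \<in> topspace T // R\<close>] by blast
      ultimately show "x \<in> topspace T \<and> R `` {x} \<in> U"
        using c by simp
    qed
  qed
  with U show "openin T {x \<in> topspace T. R `` {x} \<in> U} \<longleftrightarrow> openin (quotient_topology T R) U"
    by (simp add: openin_quotient_topology[OF assms])
qed

lemma quotient_topology_kernel_homeomorphic_image:
  assumes f: "continuous_map T Z f" "open_map T Z f"
    and R: "R = {(x, y). x \<in> topspace T \<and> y \<in> topspace T \<and> f x = f y}"
  shows "quotient_topology T R homeomorphic_space subtopology Z (f ` topspace T)"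
proof -
  have equiv: "equiv (topspace T) R"
    unfolding R by (auto simp: equiv_def refl_on_def sym_def trans_def)
  let ?Q = "quotient_topology T R"
  have q: "quotient_map T ?Q (\<lambda>x. R `` {x})"
    by (rule quotient_map_quotient_topology[OF equiv])
  have fibres: "f x = f y" if "x \<in> topspace T" "y \<in> topspace T" "R `` {x} = R `` {y}" for x y
    using that eq_equiv_class_iff[OF equiv] R by blast
  obtain g where g: "continuous_map ?Q Z g" "g ` topspace ?Q = f ` topspace T"
    and gf: "\<And>x. x \<in> topspace T \<Longrightarrow> g (R `` {x}) = f x"
    using quotient_map_lift_exists[OF q f(1) fibres] by blast
  have surj: "(\<lambda>x. R `` {x}) ` topspace T = topspace ?Q"
    using q by (rule quotient_imp_surjective_map)
  have "inj_on g (topspace ?Q)"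
  proof (rule inj_onI)
    fix c d assume c: "c \<in> topspace ?Q" and d: "d \<in> topspace ?Q" and "g c = g d"
    obtain x where x: "x \<in> topspace T" "c = R `` {x}"
      using c unfolding surj[symmetric] by blast
    obtain y where y: "y \<in> topspace T" "d = R `` {y}"
      using d unfolding surj[symmetric] by blast
    have "(x, y) \<in> R"
      using \<open>g c = g d\<close> gf x y R by simp
    then show "c = d"
      using x y equiv_class_eq[OF equiv] by simp
  qed
  moreover have "open_map ?Q Z g"
    unfolding open_map_def
  proof (intro allI impI)
    fix U assume U: "openin ?Q U"
    let ?V = "{x \<in> topspace T. R `` {x} \<in> U}"
    have "U \<subseteq> (\<lambda>x. R `` {x}) ` topspace T"
      using openin_subset[OF U] surj by simp
    then have "g ` U = g ` (\<lambda>x. R `` {x}) ` ?V"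
      by (intro arg_cong[where f = "image g"]) auto
    also have "\<dots> = (\<lambda>x. g (R `` {x})) ` ?V"
      by (simp add: image_image)
    also have "\<dots> = f ` ?V"
      using gf by (intro image_cong) auto
    finally have "g ` U = f ` ?V" .
    moreover have "openin T ?V"
      using openin_continuous_map_preimage[OF quotient_imp_continuous_map[OF q] U] .
    ultimately show "openin Z (g ` U)"
      using f(2) by (simp add: open_map_def)
  qed
  ultimately have "homeomorphic_map ?Q (subtopology Z (f ` topspace T)) g"
    using g continuous_map_image_subset_topspace[OF f(1)]
    by (intro bijective_open_imp_homeomorphic_map continuous_map_into_subtopology
        open_map_into_subtopology) auto
  then show ?thesis
    by (rule homeomorphic_map_imp_homeomorphic_space)
qed

definition postcomp :: "'x topology \<Rightarrow> ('y \<Rightarrow> 'z) \<Rightarrow> ('x \<Rightarrow> 'y) \<Rightarrow> 'x \<Rightarrow> 'z" where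
  "postcomp X e f = (\<lambda>x\<in>topspace X. e (f x))"

lemma topspace_compact_open: "topspace (compact_open X Y) = cmaps X Y"
proof -
  have "cmaps X Y \<in> {{f \<in> cmaps X Y. f ` K \<subseteq> U} | K U. compactin X K \<and> openin Y U}"
    by (rule CollectI, rule exI[of _ "{}"], rule exI[of _ "topspace Y"]) auto
  then show ?thesis
    unfolding compact_open_def by auto
qed

lemma openin_compact_open_subbasic:
  assumes "compactin X K" "openin Y U"
  shows "openin (compact_open X Y) {f \<in> cmaps X Y. f ` K \<subseteq> U}"
  unfolding compact_open_def by (rule topology_generated_by_Basis) (use assms in blast)

lemma continuous_map_into_compact_open:
  assumes "f \<in> topspace Z \<rightarrow> cmaps X Y"
    and "\<And>K U. compactin X K \<Longrightarrow> openin Y U \<Longrightarrow> openin Z {z \<in> topspace Z. f z ` K \<subseteq> U}"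
  shows "continuous_map Z (compact_open X Y) f"
  unfolding compact_open_def
proof (rule continuous_on_generated_topo)
  fix S assume "S \<in> {{f \<in> cmaps X Y. f ` K \<subseteq> U} | K U. compactin X K \<and> openin Y U}"
  then obtain K U where "S = {f \<in> cmaps X Y. f ` K \<subseteq> U}" "compactin X K" "openin Y U"
    by blast
  moreover from this have "f -` S \<inter> topspace Z = {z \<in> topspace Z. f z ` K \<subseteq> U}"
    using assms(1) by auto
  ultimately show "openin Z (f -` S \<inter> topspace Z)"
    using assms(2) by simp
next
  show "f ` topspace Z \<subseteq> \<Union>{{f \<in> cmaps X Y. f ` K \<subseteq> U} | K U. compactin X K \<and> openin Y U}"
    using assms(1) topspace_compact_open[of X Y] by (auto simp: compact_open_def)
qed

lemma cmaps_image_subset: "f \<in> cmaps X Y \<Longrightarrow> f ` topspace X \<subseteq> topspace Y"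
  by (simp add: cmaps_def continuous_map_image_subset_topspace)

lemma postcomp_in_cmaps_subtopology:
  assumes "continuous_map (subtopology Y S) Z e" "f \<in> cmaps X Y" "f ` topspace X \<subseteq> S"
  shows "postcomp X e f \<in> cmaps X Z"
proof -
  have "continuous_map X (subtopology Y S) f"
    using assms(2,3) by (auto simp: cmaps_def continuous_map_in_subtopology)
  then have "continuous_map X Z (e \<circ> f)"
    using assms(1) by (rule continuous_map_compose)
  then show ?thesis
    unfolding cmaps_def postcomp_def by (auto intro: continuous_map_eq)
qed

lemma postcomp_in_cmaps:
  assumes "continuous_map Y Z e" "f \<in> cmaps X Y"
  shows "postcomp X e f \<in> cmaps X Z"
  using postcomp_in_cmaps_subtopology[of Y "topspace Y" Z e f X] assms cmaps_image_subset[OF assms(2)]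
  by simp

lemma postcomp_eqI:
  assumes "g \<in> cmaps X Z" "\<And>x. x \<in> topspace X \<Longrightarrow> e (f x) = g x"
  shows "postcomp X e f = g"
  using assms by (auto simp: postcomp_def cmaps_def extensional_def)

lemma continuous_map_postcomp_compact_open:
  assumes e: "continuous_map (subtopology Z S) Y e"
  shows "continuous_map (subtopology (compact_open X Z) {F \<in> cmaps X Z. F ` topspace X \<subseteq> S})
           (compact_open X Y) (postcomp X e)"
    (is "continuous_map (subtopology _ ?M) _ _")
proof (rule continuous_map_into_compact_open)
  have M: "topspace (subtopology (compact_open X Z) ?M) = ?M"
    by (auto simp: topspace_compact_open)
  then show "postcomp X e \<in> topspace (subtopology (compact_open X Z) ?M) \<rightarrow> cmaps X Y"
    using postcomp_in_cmaps_subtopology[OF e] by auto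
  fix K U assume K: "compactin X K" and U: "openin Y U"
  obtain W where W: "openin Z W" "{z \<in> topspace (subtopology Z S). e z \<in> U} = S \<inter> W"
    using openin_continuous_map_preimage[OF e U] by (auto simp: openin_subtopology)
  have K_sub: "K \<subseteq> topspace X"
    using K by (rule compactin_subset_topspace)
  have "{F \<in> topspace (subtopology (compact_open X Z) ?M). postcomp X e F ` K \<subseteq> U}
        = ?M \<inter> {F \<in> cmaps X Z. F ` K \<subseteq> W}"
  proof -
    have "postcomp X e F x \<in> U \<longleftrightarrow> F x \<in> W" if "F \<in> ?M" "x \<in> K" for F x
    proof -
      have x: "x \<in> topspace X"
        using that K_sub by blast
      then have "F x \<in> topspace Z" "F x \<in> S"
        using that(1) cmaps_image_subset by blast+
      then show ?thesis
        using W(2)[THEN eqset_imp_iff, of "F x"] x by (simp add: postcomp_def)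
    qed
    then show ?thesis
      by (auto simp: M image_subset_iff topspace_compact_open)
  qed
  then show "openin (subtopology (compact_open X Z) ?M)
      {F \<in> topspace (subtopology (compact_open X Z) ?M). postcomp X e F ` K \<subseteq> U}"
    using openin_compact_open_subbasic[OF K W(1)] by (auto simp: openin_subtopology)
qed

text \<open>The tube lemma, applied to the compact set \<open>{a} \<times> f ` K\<close>.\<close>

lemma continuous_map_compact_open_pointwise:
  assumes F: "continuous_map (prod_topology A Y) Z F"
  shows "continuous_map (prod_topology A (compact_open X Y)) (compact_open X Z)
           (\<lambda>(a, f). postcomp X (\<lambda>y. F (a, y)) f)"
proof (rule continuous_map_into_compact_open)
  have slice: "continuous_map Y Z (\<lambda>y. F (a, y))" if "a \<in> topspace A" for a
    using continuous_map_compose[OF continuous_map_pairedI[OF continuous_map_const[THEN iffD2]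
          continuous_map_id] F] that by (simp add: o_def)
  show "(\<lambda>(a, f). postcomp X (\<lambda>y. F (a, y)) f)
      \<in> topspace (prod_topology A (compact_open X Y)) \<rightarrow> cmaps X Z"
    using postcomp_in_cmaps[OF slice] by (auto simp: topspace_compact_open)
  fix K V assume K: "compactin X K" and V: "openin Z V"
  have K_sub: "K \<subseteq> topspace X"
    using K by (rule compactin_subset_topspace)
  let ?P = "{z \<in> topspace (prod_topology A (compact_open X Y)).
              (\<lambda>(a, f). postcomp X (\<lambda>y. F (a, y)) f) z ` K \<subseteq> V}"
  let ?V = "{p \<in> topspace (prod_topology A Y). F p \<in> V}"
  have V': "openin (prod_topology A Y) ?V"
    using openin_continuous_map_preimage[OF F V] .
  show "openin (prod_topology A (compact_open X Y)) ?P"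
  proof (subst openin_subopen, intro ballI)
    fix p assume p: "p \<in> ?P"
    then obtain a f where p_eq: "p = (a, f)" and a: "a \<in> topspace A" and f: "f \<in> cmaps X Y"
      by (auto simp: topspace_compact_open)
    have fK: "F (a, f x) \<in> V" if "x \<in> K" for x
    proof -
      have "postcomp X (\<lambda>y. F (a, y)) f x \<in> V"
        using p that unfolding p_eq by auto
      then show ?thesis
        using that K_sub by (auto simp: postcomp_def)
    qed
    have fK_compact: "compactin Y (f ` K)"
      using K f by (auto simp: cmaps_def intro: image_compactin)
    have fK_sub: "{a} \<times> f ` K \<subseteq> ?V"
      using fK a K_sub cmaps_image_subset[OF f] by auto
    obtain A' B where AB: "openin A A'" "openin Y B" "a \<in> A'" "f ` K \<subseteq> B" "A' \<times> B \<subseteq> ?V"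
      using tube_lemma_right[OF V' fK_compact a fK_sub] by blast
    let ?T = "A' \<times> {f \<in> cmaps X Y. f ` K \<subseteq> B}"
    have "openin (prod_topology A (compact_open X Y)) ?T"
      using AB openin_compact_open_subbasic[OF K AB(2)] by (simp add: openin_prod_Times_iff)
    moreover have "?T \<subseteq> ?P"
      using AB(1,5) K_sub openin_subset by (fastforce simp: topspace_compact_open postcomp_def)
    ultimately show "\<exists>T. openin (prod_topology A (compact_open X Y)) T \<and> p \<in> T \<and> T \<subseteq> ?P"
      using p_eq f AB by auto
  qed
qed

text \<open>Post-composition with an open embedding \<open>e\<close> is an open map: its inverse is
  post-composition with \<open>e\<inverse>\<close> on the maps into \<open>e ` Y\<close>, an open set of \<open>C(X,Z)\<close> as \<open>X\<close> is compact.\<close>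

lemma open_map_postcomp_compact_open:
  assumes X: "compact_space X"
    and e: "continuous_map Y Z e" "open_map Y Z e" "inj_on e (topspace Y)"
  shows "open_map (compact_open X Y) (compact_open X Z) (postcomp X e)"
  unfolding open_map_def
proof (intro allI impI)
  let ?O = "e ` topspace Y"
  let ?M = "{F \<in> cmaps X Z. F ` topspace X \<subseteq> ?O}"
  have O: "openin Z ?O"
    using e(2) by (simp add: open_map_def)
  have M: "openin (compact_open X Z) ?M"
    using X O by (intro openin_compact_open_subbasic) (auto simp: compact_space_def)
  have "homeomorphic_map Y (subtopology Z ?O) e"
    using e continuous_map_image_subset_topspace[OF e(1)]
    by (intro bijective_open_imp_homeomorphic_map continuous_map_into_subtopology
        open_map_into_subtopology) auto
  then obtain e' where e': "homeomorphic_maps Y (subtopology Z ?O) e e'"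
    by (auto simp: homeomorphic_map_maps)
  then have e'_cont: "continuous_map (subtopology Z ?O) Y e'"
    and e'_e: "\<And>y. y \<in> topspace Y \<Longrightarrow> e' (e y) = y"
    and e_e': "\<And>z. z \<in> ?O \<Longrightarrow> e (e' z) = z"
    by (auto simp: homeomorphic_maps_def)
  fix N assume N: "openin (compact_open X Y) N"
  then have N_sub: "N \<subseteq> cmaps X Y"
    using openin_subset[OF N] by (simp add: topspace_compact_open)
  have image_eq: "postcomp X e ` N =
        {F \<in> topspace (subtopology (compact_open X Z) ?M). postcomp X e' F \<in> N}"
  proof (intro set_eqI iffI)
    fix F assume "F \<in> postcomp X e ` N"
    then obtain f where f: "f \<in> N" "F = postcomp X e f"
      by blast
    have f_cmaps: "f \<in> cmaps X Y"
      using f N_sub by blast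
    have "F \<in> cmaps X Z"
      using postcomp_in_cmaps[OF e(1) f_cmaps] f(2) by simp
    moreover have "F ` topspace X \<subseteq> ?O"
      using f(2) cmaps_image_subset[OF f_cmaps] by (auto simp: postcomp_def)
    moreover have "postcomp X e' F = f"
      using f f_cmaps cmaps_image_subset[OF f_cmaps]
      by (intro postcomp_eqI) (auto simp: postcomp_def e'_e image_subset_iff)
    ultimately show "F \<in> {F \<in> topspace (subtopology (compact_open X Z) ?M). postcomp X e' F \<in> N}"
      using f by (simp add: topspace_compact_open)
  next
    fix F assume F: "F \<in> {F \<in> topspace (subtopology (compact_open X Z) ?M). postcomp X e' F \<in> N}"
    show "F \<in> postcomp X e ` N"
    proof (rule image_eqI)
      show "F = postcomp X e (postcomp X e' F)"
        using F by (intro postcomp_eqI[symmetric]) (auto simp: topspace_compact_open postcomp_def e_e')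
      show "postcomp X e' F \<in> N"
        using F by simp
    qed
  qed
  show "openin (compact_open X Z) (postcomp X e ` N)"
    unfolding image_eq
    by (rule openin_trans_full[OF openin_continuous_map_preimage[OF
          continuous_map_postcomp_compact_open[OF e'_cont] N] M])
qed

lemma partial_action_dom_subset:
  "topological_partial_action Y D th \<Longrightarrow> D g \<subseteq> topspace Y"
  by (simp add: topological_partial_action_def openin_subset)

lemma partial_action_in_dom:
  assumes "topological_partial_action Y D th" "y \<in> D (- g)"
  shows "th g y \<in> D g"
proof -
  have "th g ` topspace (subtopology Y (D (- g))) = topspace (subtopology Y (D g))"
    using assms(1) unfolding topological_partial_action_def by (metis homeomorphic_imp_surjective_map)
  then show ?thesis
    using assms partial_action_dom_subset[OF assms(1)] by auto
qed

lemma continuous_map_partial_action: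
  "topological_partial_action Y D th \<Longrightarrow> continuous_map (subtopology Y (D (- g))) Y (th g)"
  unfolding topological_partial_action_def
  by (metis continuous_map_in_subtopology homeomorphic_imp_continuous_map)

lemma equiv_env_rel:
  fixes D :: "'g::group_add \<Rightarrow> 'w set" and TG :: "'g topology"
  assumes TG: "topspace TG = UNIV" and th: "topological_partial_action W D th"
  shows "equiv (topspace (prod_topology TG W)) (env_rel W D th)"
proof (rule equivI)
  note dom = partial_action_dom_subset[OF th] and in_dom = partial_action_in_dom[OF th]
  have inv: "th (- g) (th g y) = y" if "y \<in> D (- g)" for g y
    using th that by (simp add: topological_partial_action_def)
  have comp: "y \<in> D (- (g + h)) \<and> th g (th h y) = th (g + h) y"
    if "y \<in> D (- h)" "th h y \<in> D (- g)" for g h y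
    using th that unfolding topological_partial_action_def by blast
  show "env_rel W D th \<subseteq> topspace (prod_topology TG W) \<times> topspace (prod_topology TG W)"
  proof clarify
    fix g x h y assume "((g, x), (h, y)) \<in> env_rel W D th"
    then have "x \<in> topspace W" "x \<in> D (- (- h + g))" "th (- h + g) x = y"
      by (auto simp: env_rel_def minus_add)
    then show "(g, x) \<in> topspace (prod_topology TG W) \<and> (h, y) \<in> topspace (prod_topology TG W)"
      using TG dom[of "- h + g"] in_dom[of x "- h + g"] by auto
  qed
  show "refl_on (topspace (prod_topology TG W)) (env_rel W D th)"
    using th by (auto simp: refl_on_def env_rel_def topological_partial_action_def)
  show "sym (env_rel W D th)"
  proof (rule symI, clarify)
    fix g x h y assume "((g, x), (h, y)) \<in> env_rel W D th"
    then have x: "x \<in> D (- (- h + g))" "th (- h + g) x = y"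
      by (auto simp: env_rel_def minus_add)
    then show "((h, y), (g, x)) \<in> env_rel W D th"
      using in_dom[OF x(1)] inv[OF x(1)] dom by (auto simp: env_rel_def minus_add)
  qed
  show "trans (env_rel W D th)"
  proof (rule transI, clarify)
    fix g x h y k z
    assume "((g, x), (h, y)) \<in> env_rel W D th" "((h, y), (k, z)) \<in> env_rel W D th"
    then have x: "x \<in> topspace W" "x \<in> D (- (- h + g))" "th (- k + h) (th (- h + g) x) = z"
      and "th (- h + g) x \<in> D (- (- k + h))"
      by (auto simp: env_rel_def minus_add)
    moreover have "- k + h + (- h + g) = - k + g"
      by (simp add: add.assoc[symmetric])
    ultimately show "((g, x), (k, z)) \<in> env_rel W D th"
      using comp[of x "- h + g" "- k + h"] by (auto simp: env_rel_def minus_add)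
  qed
qed

locale enveloping_action =
  fixes TG :: "'g::group_add topology" and Y :: "'y topology"
    and D :: "'g \<Rightarrow> 'y set" and th :: "'g \<Rightarrow> 'y \<Rightarrow> 'y"
  assumes topological_group: "topological_group TG"
    and nice: "nice_partial_action TG Y D th"
begin

abbreviation "R \<equiv> env_rel Y D th"
abbreviation "YG \<equiv> enveloping_space TG Y D th"

definition env_class :: "'g \<times> 'y \<Rightarrow> ('g \<times> 'y) set" where
  "env_class p = R `` {p}"

lemma topspace_group: "topspace TG = UNIV"
  using topological_group by (simp add: topological_group_def)

lemma partial_action: "topological_partial_action Y D th"
  using nice by (simp add: nice_partial_action_def)

lemma equiv_R: "equiv (topspace (prod_topology TG Y)) R"
  by (rule equiv_env_rel[OF topspace_group partial_action])

lemma openin_enveloping_space: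
  "openin YG U \<longleftrightarrow> U \<subseteq> topspace (prod_topology TG Y) // R \<and> openin (prod_topology TG Y) (\<Union>U)"
  unfolding enveloping_space_def by (rule openin_quotient_topology[OF equiv_R])

lemma continuous_map_env_class: "continuous_map (prod_topology TG Y) YG env_class"
  unfolding enveloping_space_def env_class_def[abs_def]
  by (rule quotient_imp_continuous_map[OF quotient_map_quotient_topology[OF equiv_R]])

lemma env_class_eq_iff:
  assumes "y \<in> topspace Y" "y' \<in> topspace Y"
  shows "env_class (g, y) = env_class (h, y') \<longleftrightarrow> y \<in> D (- g + h) \<and> th (- h + g) y = y'"
proof -
  have "env_class (g, y) = env_class (h, y') \<longleftrightarrow> ((g, y), (h, y')) \<in> R"
    unfolding env_class_def using assms by (intro eq_equiv_class_iff[OF equiv_R]) (auto simp: topspace_group)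
  then show ?thesis
    using assms by (simp add: env_rel_def)
qed

lemma inj_on_env_class: "inj_on (\<lambda>y. env_class (g, y)) (topspace Y)"
  using partial_action by (auto intro!: inj_onI simp: env_class_eq_iff topological_partial_action_def)

lemma continuous_map_env_class_slice: "continuous_map Y YG (\<lambda>y. env_class (g, y))"
  using continuous_map_compose[OF continuous_map_pairedI[OF continuous_map_const[THEN iffD2]
        continuous_map_id] continuous_map_env_class]
  by (simp add: o_def topspace_group)

lemma continuous_map_left_translation: "continuous_map TG TG (\<lambda>h. a + h)"
proof -
  have "continuous_map TG (prod_topology TG TG) (\<lambda>h. (a, h))"
    by (intro continuous_map_pairedI) (auto simp: topspace_group)
  then show ?thesis
    using continuous_map_compose topological_group by (fastforce simp: topological_group_def o_def)
qed

text \<open>The saturation of \<open>{g} \<times> V\<close> is the preimage of \<open>V\<close> under \<open>(h, z) \<mapsto> \<theta>\<^bsub>-g+h\<^esub> z\<close>,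
  which is open because the action is nice and left translation is continuous.\<close>

lemma open_map_env_class_slice: "open_map Y YG (\<lambda>y. env_class (g, y))"
  unfolding open_map_def
proof (intro allI impI)
  fix V assume V: "openin Y V"
  have sym: "sym R"
    using equiv_R by (simp add: equiv_def)
  let ?Dom = "{(g, y). y \<in> D (- g)}"
  let ?E = "{p \<in> topspace (subtopology (prod_topology TG Y) ?Dom). (\<lambda>(k, y). th k y) p \<in> V}"
  have "openin (subtopology (prod_topology TG Y) ?Dom) ?E"
    using nice V by (intro openin_continuous_map_preimage) (auto simp: nice_partial_action_def)
  moreover have "openin (prod_topology TG Y) ?Dom"
    using nice by (simp add: nice_partial_action_def)
  ultimately have E: "openin (prod_topology TG Y) ?E"
    by (rule openin_trans_full)
  have shift: "continuous_map (prod_topology TG Y) (prod_topology TG Y) (\<lambda>(h, z). (- g + h, z))"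
  proof -
    have "continuous_map (prod_topology TG Y) (prod_topology TG Y) (\<lambda>p. (- g + fst p, snd p))"
      by (intro continuous_map_pairedI continuous_map_snd
          continuous_map_compose[OF continuous_map_fst continuous_map_left_translation, unfolded o_def])
    then show ?thesis
      by (simp add: case_prod_beta')
  qed
  have "\<Union>((\<lambda>y. env_class (g, y)) ` V) =
        {p \<in> topspace (prod_topology TG Y). (\<lambda>(h, z). (- g + h, z)) p \<in> ?E}"
  proof (intro set_eqI iffI)
    fix p assume "p \<in> \<Union>((\<lambda>y. env_class (g, y)) ` V)"
    then obtain y where y: "y \<in> V" "((g, y), p) \<in> R"
      by (auto simp: env_class_def)
    obtain h z where p: "p = (h, z)"
      by fastforce
    have "((h, z), (g, y)) \<in> R"
      using sym y(2) unfolding p by (rule symD)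
    with y(1) p show "p \<in> {p \<in> topspace (prod_topology TG Y). (\<lambda>(h, z). (- g + h, z)) p \<in> ?E}"
      by (auto simp: env_rel_def topspace_group minus_add)
  next
    fix p assume "p \<in> {p \<in> topspace (prod_topology TG Y). (\<lambda>(h, z). (- g + h, z)) p \<in> ?E}"
    then obtain h z where p: "p = (h, z)" "z \<in> topspace Y" "z \<in> D (- h + g)" "th (- g + h) z \<in> V"
      by (auto simp: topspace_group minus_add)
    then have "((h, z), (g, th (- g + h) z)) \<in> R"
      by (auto simp: env_rel_def)
    with sym have "((g, th (- g + h) z), (h, z)) \<in> R"
      by (rule symD)
    then show "p \<in> \<Union>((\<lambda>y. env_class (g, y)) ` V)"
      using p by (auto simp: env_class_def)
  qed
  moreover have "(\<lambda>y. env_class (g, y)) ` V \<subseteq> topspace (prod_topology TG Y) // R"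
    using openin_subset[OF V] by (auto simp: env_class_def topspace_group intro: quotientI)
  ultimately show "openin YG ((\<lambda>y. env_class (g, y)) ` V)"
    using openin_continuous_map_preimage[OF shift E] by (simp add: openin_enveloping_space)
qed

definition env_pointwise :: "'x topology \<Rightarrow> 'g \<times> ('x \<Rightarrow> 'y) \<Rightarrow> 'x \<Rightarrow> ('g \<times> 'y) set" where
  "env_pointwise X = (\<lambda>(g, f). postcomp X (\<lambda>y. env_class (g, y)) f)"

lemma continuous_map_env_pointwise:
  "continuous_map (prod_topology TG (compact_open X Y)) (compact_open X YG) (env_pointwise X)"
  unfolding env_pointwise_def
  by (rule continuous_map_compact_open_pointwise[OF continuous_map_env_class])

lemma open_map_env_pointwise:
  assumes "compact_space X"
  shows "open_map (prod_topology TG (compact_open X Y)) (compact_open X YG) (env_pointwise X)"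
  unfolding open_map_def
proof (intro allI impI)
  fix W assume W: "openin (prod_topology TG (compact_open X Y)) W"
  let ?slice = "\<lambda>g. {f \<in> topspace (compact_open X Y). (g, f) \<in> W}"
  have "env_pointwise X ` W = (\<Union>g. postcomp X (\<lambda>y. env_class (g, y)) ` ?slice g)"
    using openin_subset[OF W] by (force simp: env_pointwise_def)
  moreover have "openin (compact_open X Y) (?slice g)" for g
    using W by (intro openin_continuous_map_preimage[where X = "compact_open X Y"])
      (auto intro!: continuous_map_pairedI simp: topspace_group)
  ultimately show "openin (compact_open X YG) (env_pointwise X ` W)"
    using open_map_postcomp_compact_open[OF assms continuous_map_env_class_slice
        open_map_env_class_slice inj_on_env_class]
    by (auto simp: open_map_def)
qed

lemma env_pointwise_eq_iff:
  assumes "f \<in> cmaps X Y" "f' \<in> cmaps X Y"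
  shows "env_pointwise X (g, f) = env_pointwise X (h, f') \<longleftrightarrow>
           (\<forall>x\<in>topspace X. f x \<in> D (- g + h) \<and> th (- h + g) (f x) = f' x)"
proof -
  have "env_pointwise X (g, f) = env_pointwise X (h, f') \<longleftrightarrow>
          (\<forall>x\<in>topspace X. env_class (g, f x) = env_class (h, f' x))"
    by (auto simp: env_pointwise_def postcomp_def fun_eq_iff)
  also have "\<dots> \<longleftrightarrow> (\<forall>x\<in>topspace X. f x \<in> D (- g + h) \<and> th (- h + g) (f x) = f' x)"
  proof (rule ball_cong[OF refl])
    fix x assume "x \<in> topspace X"
    then show "env_class (g, f x) = env_class (h, f' x) \<longleftrightarrow>
        f x \<in> D (- g + h) \<and> th (- h + g) (f x) = f' x"
      using assms cmaps_image_subset by (intro env_class_eq_iff) blast+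
  qed
  finally show ?thesis .
qed

lemma env_rel_cmaps_eq_kernel:
  "env_rel (compact_open X Y) (cmaps_dom X Y D) (cmaps_act X th) =
     {(p, p'). p \<in> topspace (prod_topology TG (compact_open X Y)) \<and>
               p' \<in> topspace (prod_topology TG (compact_open X Y)) \<and>
               env_pointwise X p = env_pointwise X p'}"
proof (intro set_eqI iffI; clarify)
  fix g f h f'
  assume "((g, f), (h, f')) \<in> env_rel (compact_open X Y) (cmaps_dom X Y D) (cmaps_act X th)"
  then have f: "f \<in> cmaps X Y" "f ` topspace X \<subseteq> D (- (- h + g))"
    and f': "f' = postcomp X (th (- h + g)) f"
    by (auto simp: env_rel_def cmaps_dom_def cmaps_act_def postcomp_def topspace_compact_open minus_add)
  have "f' \<in> cmaps X Y"
    using postcomp_in_cmaps_subtopology[OF continuous_map_partial_action[OF partial_action] f] f'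
    by simp
  with f f' show "(g, f) \<in> topspace (prod_topology TG (compact_open X Y)) \<and>
      (h, f') \<in> topspace (prod_topology TG (compact_open X Y)) \<and>
      env_pointwise X (g, f) = env_pointwise X (h, f')"
    by (auto simp: env_pointwise_eq_iff topspace_group topspace_compact_open postcomp_def minus_add)
next
  fix g f h f'
  assume "(g, f) \<in> topspace (prod_topology TG (compact_open X Y))"
    "(h, f') \<in> topspace (prod_topology TG (compact_open X Y))"
    and eq: "env_pointwise X (g, f) = env_pointwise X (h, f')"
  then have f: "f \<in> cmaps X Y" "f' \<in> cmaps X Y"
    by (auto simp: topspace_compact_open)
  then have "\<forall>x\<in>topspace X. f x \<in> D (- g + h) \<and> th (- h + g) (f x) = f' x"
    using eq by (simp add: env_pointwise_eq_iff)
  moreover from this have "cmaps_act X th (- h + g) f = f'"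
    unfolding cmaps_act_def postcomp_def[symmetric] using f by (intro postcomp_eqI) auto
  ultimately show "((g, f), (h, f')) \<in> env_rel (compact_open X Y) (cmaps_dom X Y D) (cmaps_act X th)"
    using f by (auto simp: env_rel_def cmaps_dom_def topspace_compact_open)
qed

end

theorem theorem3p7:
  fixes TG :: "'g::group_add topology"
    and Y :: "'y topology"
    and X :: "'x topology"
    and D :: "'g \<Rightarrow> 'y set"
    and th :: "'g \<Rightarrow> 'y \<Rightarrow> 'y"
  assumes "topological_group TG"
    and "Hausdorff_space TG"
    and "nice_partial_action TG Y D th"
    and "compact_space X"
  shows "\<exists>U. openin (compact_open X (enveloping_space TG Y D th)) U \<and>
           enveloping_space TG (compact_open X Y) (cmaps_dom X Y D) (cmaps_act X th)
             homeomorphic_space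
           subtopology (compact_open X (enveloping_space TG Y D th)) U"
proof -
  interpret enveloping_action TG Y D th
    using assms(1,3) by unfold_locales
  let ?GC = "prod_topology TG (compact_open X Y)"
  have "open_map ?GC (compact_open X YG) (env_pointwise X)"
    using assms(4) by (rule open_map_env_pointwise)
  show ?thesis
  proof (intro exI conjI)
    show "openin (compact_open X YG) (env_pointwise X ` topspace ?GC)"
      using \<open>open_map _ _ _\<close> openin_topspace unfolding open_map_def by blast
    show "enveloping_space TG (compact_open X Y) (cmaps_dom X Y D) (cmaps_act X th)
        homeomorphic_space subtopology (compact_open X YG) (env_pointwise X ` topspace ?GC)"
      unfolding enveloping_space_def[of TG "compact_open X Y"]
      by (rule quotient_topology_kernel_homeomorphic_image[OF continuous_map_env_pointwise
          \<open>open_map _ _ _\<close> env_rel_cmaps_eq_kernel])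
  qed
qed

end
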